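(* Let $a>0$ be real and suppose $-a\notin A_1\cup A_\infty$. Then the external ray $R^\infty_a(0)$ and the internal ray $R^0_a(0)$ of $A_1$ land at the same point.
   Context: $f_a(z)=z^2(z+3a/2)$. $A_1$ is the immediate basin of the super-attracting fixed point $0$ and $A_\infty$ the basin of infinity. When $-a\notin A_1$ there is a unique Böttcher map $\phi_a:A_1\to\mathbb D$ with $\phi_a\circ f_a=\phi_a^2$, and internal rays are $R^0_a(t)=\phi_a^{-1}(e^{2\pi it}[0,1))$. When $-a\notin A_\infty$ the external rays $R^\infty_a(t)$ are defined via the Böttcher coordinate at infinity conjugating $f_a$ to $z\mapsto z^3$, normalized tangent to the identity at infinity. *)

theory Defs
  imports "HOL-Analysis.Analysis"
begin

definition fa :: "complex \<Rightarrow> complex \<Rightarrow> complex" where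
  "fa a z = z^2 * (z + 3 * a / 2)"

definition basin0 :: "complex \<Rightarrow> complex set" where
  "basin0 a = {z. (\<lambda>n. (fa a ^^ n) z) \<longlonglongrightarrow> 0}"

definition A1 :: "complex \<Rightarrow> complex set" where
  "A1 a = connected_component_set (basin0 a) 0"

definition Ainf :: "complex \<Rightarrow> complex set" where
  "Ainf a = {z. filterlim (\<lambda>n. (fa a ^^ n) z) at_infinity sequentially}"

definition is_boettcher0 :: "complex \<Rightarrow> (complex \<Rightarrow> complex) \<Rightarrow> bool" where
  "is_boettcher0 a \<phi> \<longleftrightarrow>
     \<phi> holomorphic_on A1 a \<and> bij_betw \<phi> (A1 a) (ball 0 1) \<and>
     (\<forall>z\<in>A1 a. \<phi> (fa a z) = (\<phi> z)^2)"

text \<open>Boettcher coordinate at infinity (globally defined on A_infinity when the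
  free critical point does not escape): conformal isomorphism of A_infinity onto
  the complement of the closed unit disc with psi o f_a = psi^3, tangent to the
  identity at infinity.\<close>
definition is_boettcher_inf :: "complex \<Rightarrow> (complex \<Rightarrow> complex) \<Rightarrow> bool" where
  "is_boettcher_inf a \<psi> \<longleftrightarrow>
     \<psi> holomorphic_on Ainf a \<and> bij_betw \<psi> (Ainf a) (- cball 0 1) \<and>
     (\<forall>z\<in>Ainf a. \<psi> (fa a z) = (\<psi> z)^3) \<and>
     ((\<lambda>z. \<psi> z / z) \<longlongrightarrow> 1) at_infinity"

definition internal_ray_lands ::
  "complex \<Rightarrow> (complex \<Rightarrow> complex) \<Rightarrow> real \<Rightarrow> complex \<Rightarrow> bool" where
  "internal_ray_lands a \<phi> t w \<longleftrightarrow>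
     ((\<lambda>r. inv_into (A1 a) \<phi> (of_real r * exp (2 * pi * \<i> * of_real t))) \<longlongrightarrow> w)
       (at_left 1)"

definition external_ray_lands ::
  "complex \<Rightarrow> (complex \<Rightarrow> complex) \<Rightarrow> real \<Rightarrow> complex \<Rightarrow> bool" where
  "external_ray_lands a \<psi> t w \<longleftrightarrow>
     ((\<lambda>r. inv_into (Ainf a) \<psi> (of_real r * exp (2 * pi * \<i> * of_real t))) \<longlongrightarrow> w)
       (at_right 1)"

end

theory Submission
  imports Defs "HOL-Complex_Analysis.Complex_Analysis"
begin

text \<open>On the positive real axis \<open>f\<^sub>a\<close> restricts to \<open>x \<mapsto> x\<^sup>2 (x + b)\<close> with
  \<open>b = 3a/2\<close>, whose positive fixed point \<open>\<beta>\<close> separates \<open>[0, \<beta>)\<close>, attracted to \<open>0\<close>,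
  from \<open>(\<beta>, \<infinity>)\<close>, escaping to \<open>\<infinity>\<close>. Both Boettcher maps are real and positive on
  these intervals: close to the super-attracting point their argument is small and is
  multiplied by the local degree along orbits, so it vanishes; elsewhere some power of the
  map is positive, and positivity spreads by continuity. Being injective and continuous,
  the maps then send \<open>[0, \<beta>)\<close> increasingly onto \<open>[0, 1)\<close> and \<open>(\<beta>, \<infinity>)\<close> onto \<open>(1, \<infinity>)\<close>.
  So the internal ray of angle \<open>0\<close> is \<open>[0, \<beta>)\<close>, the external one is \<open>(\<beta>, \<infinity>)\<close>, and
  both land at \<open>\<beta>\<close>.\<close>

section \<open>Nonnegative reals and power equations\<close>

lemma nonneg_Reals_iff_of_real_norm: "z \<in> \<real>\<^sub>\<ge>\<^sub>0 \<longleftrightarrow> complex_of_real (norm z) = z"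
proof
  show "z \<in> \<real>\<^sub>\<ge>\<^sub>0 \<Longrightarrow> complex_of_real (norm z) = z"
    by (auto elim!: nonneg_Reals_cases)
qed (metis nonneg_Reals_of_real_iff norm_ge_zero)

lemma Arg_power:
  assumes "z \<noteq> 0" "real n * \<bar>Arg z\<bar> < pi"
  shows "Arg (z ^ n) = real n * Arg z"
proof (rule Arg_unique)
  have "z = of_real (norm z) * exp (\<i> * of_real (Arg z))"
    using Arg_eq[OF assms(1)] by simp
  then have "z ^ n = of_real (norm z ^ n) * exp (of_nat n * (\<i> * of_real (Arg z)))"
    by (metis exp_of_nat_mult of_real_power power_mult_distrib)
  then show "of_real (norm z ^ n) * exp (\<i> * of_real (real n * Arg z)) = z ^ n"
    by (simp add: mult.left_commute)
  show "0 < norm z ^ n" using assms(1) by simp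
  have "\<bar>real n * Arg z\<bar> < pi"
    using assms(2) by (simp add: abs_mult)
  then show "- pi < real n * Arg z" "real n * Arg z \<le> pi"
    by linarith+
qed

text \<open>An argument that is multiplied by \<open>d > 1\<close> at each step and stays
  bounded must vanish.\<close>
lemma nonneg_Reals_of_iterated_powers:
  fixes w :: "nat \<Rightarrow> complex"
  assumes "d > 1" and w_Suc: "\<And>n. w (Suc n) = w n ^ d" and "\<And>n. w n \<noteq> 0"
    and Arg_small: "\<And>n. \<bar>Arg (w n)\<bar> < pi / d"
  shows "w 0 \<in> \<real>\<^sub>\<ge>\<^sub>0"
proof -
  have Arg_w: "Arg (w n) = real d ^ n * Arg (w 0)" for n
  proof (induction n)
    case (Suc n)
    have "real d * \<bar>Arg (w n)\<bar> < pi"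
      using Arg_small[of n] \<open>d > 1\<close> by (simp add: field_simps)
    then show ?case
      using Arg_power[of "w n" d] \<open>w n \<noteq> 0\<close> Suc by (simp add: w_Suc)
  qed simp
  have "Arg (w 0) = 0"
  proof (rule ccontr)
    assume "Arg (w 0) \<noteq> 0"
    then obtain n where "pi / \<bar>Arg (w 0)\<bar> < real d ^ n"
      using real_arch_pow[of "real d" "pi / \<bar>Arg (w 0)\<bar>"] \<open>d > 1\<close> by auto
    then have "pi < \<bar>Arg (w n)\<bar>"
      using \<open>Arg (w 0) \<noteq> 0\<close> by (simp add: Arg_w[of n] abs_mult divide_less_eq)
    moreover have "pi / d \<le> pi" using \<open>d > 1\<close> by (simp add: divide_le_eq)
    ultimately show False using Arg_small[of n] by linarith
  qed
  then show ?thesis by (simp add: Arg_eq_0 complex_nonneg_Reals_iff complex_is_Real_iff)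
qed

lemma nonneg_Reals_by_continuity:
  fixes g :: "'a::topological_space \<Rightarrow> complex"
  assumes "connected I" "continuous_on I g" "\<And>y. y \<in> I \<Longrightarrow> g y \<noteq> 0"
    and "m > 0" "\<And>y. y \<in> I \<Longrightarrow> g y ^ m \<in> \<real>\<^sub>\<ge>\<^sub>0"
    and "y0 \<in> I" "g y0 \<in> \<real>\<^sub>\<ge>\<^sub>0" "y \<in> I"
  shows "g y \<in> \<real>\<^sub>\<ge>\<^sub>0"
proof -
  define h where "h y = g y / of_real (norm (g y))" for y
  have root: "h y ^ m = 1" if "y \<in> I" for y
    using assms(3,5)[OF that]
    by (simp add: h_def power_divide norm_power nonneg_Reals_iff_of_real_norm)
  have "h constant_on I"
  proof (rule continuous_finite_range_constant)
    show "continuous_on I h"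
      unfolding h_def using assms(2,3) by (intro continuous_intros) auto
    show "finite (h ` I)"
      using root \<open>m > 0\<close> by (intro finite_subset[OF _ finite_roots_unity[of m]]) auto
  qed fact
  moreover have "h y0 = 1"
    using assms(3,6,7) by (simp add: h_def nonneg_Reals_iff_of_real_norm)
  ultimately have "h y = 1"
    using assms(6,8) by (metis constant_on_def)
  then show ?thesis
    using assms(3,8) by (simp add: h_def nonneg_Reals_iff_of_real_norm divide_eq_1_iff)
qed

lemma exists_less_of_power_conjugate:
  fixes P :: "'a \<Rightarrow> real"
  assumes T_onto: "\<And>x. x \<in> I \<Longrightarrow> \<exists>y\<in>I. T y = x"
    and P_T: "\<And>y. y \<in> I \<Longrightarrow> P (T y) = P y ^ d"
    and "d > 1" "y0 \<in> I" "c > 1"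
  shows "\<exists>x\<in>I. P x < c"
proof (rule ccontr)
  assume "\<not> (\<exists>x\<in>I. P x < c)"
  then have ge: "c \<le> P x" if "x \<in> I" for x
    using that by fastforce
  have "c ^ (d ^ n) \<le> P x" if "x \<in> I" for x n
    using that
  proof (induction n arbitrary: x)
    case (Suc n)
    obtain y where "y \<in> I" "T y = x" using T_onto[OF Suc.prems] by blast
    have "(c ^ (d ^ n)) ^ d \<le> P y ^ d"
      using Suc.IH[OF \<open>y \<in> I\<close>] \<open>c > 1\<close> by (intro power_mono) auto
    then show ?case
      using P_T[OF \<open>y \<in> I\<close>] \<open>T y = x\<close> by (simp add: power_mult[symmetric] mult.commute)
  qed (simp add: ge)
  moreover obtain n where "P y0 < c ^ n"
    using real_arch_pow[OF \<open>c > 1\<close>] by blast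
  moreover have "c ^ n \<le> c ^ (d ^ n)"
  proof (rule power_increasing)
    have "n < 2 ^ n" by (rule less_exp)
    also have "2 ^ n \<le> d ^ n" using \<open>d > 1\<close> by (intro power_mono) auto
    finally show "n \<le> d ^ n" by simp
  qed (use \<open>c > 1\<close> in simp)
  ultimately show False
    using \<open>y0 \<in> I\<close> by (meson not_le order.strict_trans2)
qed

section \<open>The real dynamics of \<open>f\<^sub>a\<close>\<close>

locale cubic_family =
  fixes a :: real
  assumes a_pos: "0 < a"
begin

abbreviation f :: "complex \<Rightarrow> complex" where "f \<equiv> fa (of_real a)"

definition b :: real where "b = 3 * a / 2"

definition freal :: "real \<Rightarrow> real" where "freal x = x\<^sup>2 * (x + b)"

text \<open>The positive root of \<open>x (x + b) = 1\<close>, i.e. the positive fixed point of \<open>freal\<close>.\<close>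
definition beta :: real where "beta = (sqrt (b\<^sup>2 + 4) - b) / 2"

lemma b_pos: "0 < b"
  using a_pos by (simp add: b_def)

lemma beta_pos: "0 < beta"
proof -
  have "sqrt (b\<^sup>2) < sqrt (b\<^sup>2 + 4)"
    by (intro real_sqrt_less_mono) simp
  then show ?thesis
    using b_pos by (simp add: beta_def)
qed

lemma beta_times_beta_plus_b: "beta * (beta + b) = 1"
proof -
  have "(sqrt (b\<^sup>2 + 4))\<^sup>2 = b\<^sup>2 + 4" by simp
  then show ?thesis
    unfolding beta_def by (simp add: field_simps power2_eq_square)
qed

lemma freal_eq: "freal x = x * (x * (x + b))"
  by (simp add: freal_def power2_eq_square)

lemma freal_beta: "freal beta = beta"
  by (simp add: freal_eq beta_times_beta_plus_b)

lemma freal_nonneg: "0 \<le> x \<Longrightarrow> 0 \<le> freal x"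
  using b_pos by (simp add: freal_def)

lemma freal_pos: "0 < x \<Longrightarrow> 0 < freal x"
  using b_pos by (simp add: freal_def)

lemma freal_mono: "0 \<le> x \<Longrightarrow> x \<le> y \<Longrightarrow> freal x \<le> freal y"
  unfolding freal_def using b_pos by (intro mult_mono power_mono) auto

lemma continuous_on_freal: "continuous_on S freal"
  unfolding freal_def by (intro continuous_intros)

lemma freal_factor_le_1: "0 \<le> x \<Longrightarrow> x \<le> beta \<Longrightarrow> x * (x + b) \<le> 1"
proof -
  assume "0 \<le> x" "x \<le> beta"
  then have "x * (x + b) \<le> beta * (beta + b)"
    using b_pos by (intro mult_mono) auto
  then show ?thesis by (simp add: beta_times_beta_plus_b)
qed

lemma freal_factor_less_1: "0 \<le> x \<Longrightarrow> x < beta \<Longrightarrow> x * (x + b) < 1"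
proof -
  assume "0 \<le> x" "x < beta"
  then have "x * (x + b) \<le> x * (beta + b)"
    by (intro mult_left_mono) auto
  also have "\<dots> < beta * (beta + b)"
    using \<open>x < beta\<close> beta_pos b_pos by (intro mult_strict_right_mono) auto
  finally show ?thesis by (simp add: beta_times_beta_plus_b)
qed

lemma freal_factor_ge_1: "beta \<le> x \<Longrightarrow> 1 \<le> x * (x + b)"
proof -
  assume "beta \<le> x"
  then have "beta * (beta + b) \<le> x * (x + b)"
    using beta_pos b_pos by (intro mult_mono) auto
  then show ?thesis by (simp add: beta_times_beta_plus_b)
qed

lemma freal_factor_gt_1: "beta < x \<Longrightarrow> 1 < x * (x + b)"
proof -
  assume "beta < x"
  then have "beta * (beta + b) < x * (x + b)"
    using beta_pos b_pos by (intro mult_strict_mono) auto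
  then show ?thesis by (simp add: beta_times_beta_plus_b)
qed

lemma funpow_freal_nonneg: "0 \<le> x \<Longrightarrow> 0 \<le> (freal ^^ n) x"
  by (induction n) (simp_all add: freal_nonneg)

lemma funpow_freal_pos: "0 < x \<Longrightarrow> 0 < (freal ^^ n) x"
  by (induction n) (simp_all add: freal_pos)

lemma funpow_freal_mono: "0 \<le> x \<Longrightarrow> x \<le> y \<Longrightarrow> (freal ^^ n) x \<le> (freal ^^ n) y"
  by (induction n) (simp_all add: freal_mono funpow_freal_nonneg)

lemma funpow_freal_le: "0 \<le> x \<Longrightarrow> x \<le> beta \<Longrightarrow> (freal ^^ n) x \<le> x"
proof (induction n)
  case (Suc n)
  define y where "y = (freal ^^ n) x"
  have "0 \<le> y" "y \<le> x"
    using Suc by (simp_all add: y_def funpow_freal_nonneg)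
  then have "freal y \<le> y * 1"
    unfolding freal_eq using Suc.prems freal_factor_le_1[of y] by (intro mult_left_mono) auto
  then show ?case using \<open>y \<le> x\<close> by (simp add: y_def)
qed simp

lemma funpow_freal_ge: "beta \<le> x \<Longrightarrow> x \<le> (freal ^^ n) x"
proof (induction n)
  case (Suc n)
  define y where "y = (freal ^^ n) x"
  have "x \<le> y" using Suc by (simp add: y_def)
  then have "y * 1 \<le> freal y"
    unfolding freal_eq using Suc.prems beta_pos freal_factor_ge_1[of y] by (intro mult_left_mono) auto
  then show ?case using \<open>x \<le> y\<close> by (simp add: y_def)
qed simp

lemma funpow_freal_le_geometric:
  assumes "0 \<le> x" "x \<le> beta"
  shows "(freal ^^ n) x \<le> (x * (x + b)) ^ n * x"
proof (induction n)
  case (Suc n)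
  define y where "y = (freal ^^ n) x"
  have "0 \<le> y" "y \<le> x"
    using assms by (simp_all add: y_def funpow_freal_nonneg funpow_freal_le)
  have q: "0 \<le> x * (x + b)"
    using assms b_pos by auto
  have "freal y \<le> y * (x * (x + b))"
    unfolding freal_eq using \<open>0 \<le> y\<close> \<open>y \<le> x\<close> b_pos by (intro mult_left_mono mult_mono) auto
  also have "\<dots> \<le> (x * (x + b)) ^ n * x * (x * (x + b))"
    using Suc.IH q by (intro mult_right_mono) (auto simp: y_def)
  finally show ?case by (simp add: y_def mult_ac)
qed simp

lemma funpow_freal_ge_geometric:
  assumes "beta \<le> x"
  shows "(x * (x + b)) ^ n * x \<le> (freal ^^ n) x"
proof (induction n)
  case (Suc n)
  define y where "y = (freal ^^ n) x"
  have q: "1 \<le> x * (x + b)"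
    using assms by (rule freal_factor_ge_1)
  have "0 \<le> x" "x \<le> y"
    using assms beta_pos by (simp_all add: y_def funpow_freal_ge)
  have "(x * (x + b)) ^ n * x * (x * (x + b)) \<le> y * (x * (x + b))"
    using Suc.IH q by (intro mult_right_mono) (auto simp: y_def)
  also have "\<dots> \<le> freal y"
    unfolding freal_eq using \<open>0 \<le> x\<close> \<open>x \<le> y\<close> b_pos by (intro mult_left_mono mult_mono) auto
  finally show ?case by (simp add: y_def mult_ac)
qed simp

lemma funpow_freal_tendsto_0:
  assumes "0 \<le> x" "x < beta"
  shows "(\<lambda>n. (freal ^^ n) x) \<longlonglongrightarrow> 0"
proof (rule Lim_null_comparison)
  have "0 \<le> x * (x + b)" "x * (x + b) < 1"
    using assms b_pos freal_factor_less_1 by auto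
  then show "(\<lambda>n. (x * (x + b)) ^ n * x) \<longlonglongrightarrow> 0"
    by (intro tendsto_mult_left_zero LIMSEQ_power_zero) auto
  show "\<forall>\<^sub>F n in sequentially. norm ((freal ^^ n) x) \<le> (x * (x + b)) ^ n * x"
    using assms funpow_freal_le_geometric funpow_freal_nonneg by simp
qed

lemma funpow_freal_tendsto_at_top:
  assumes "beta < x"
  shows "filterlim (\<lambda>n. (freal ^^ n) x) at_top sequentially"
proof (rule filterlim_at_top_mono)
  have "1 < x * (x + b)" using assms by (rule freal_factor_gt_1)
  then have "filterlim (\<lambda>n. norm ((x * (x + b)) ^ n)) at_top sequentially"
    by (intro filterlim_at_infinity_imp_norm_at_top filterlim_realpow_sequentially_gt1) simp
  then have "filterlim (\<lambda>n. (x * (x + b)) ^ n) at_top sequentially"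
    using \<open>1 < x * (x + b)\<close> by (simp add: norm_power)
  then show "filterlim (\<lambda>n. (x * (x + b)) ^ n * x) at_top sequentially"
    using assms beta_pos by (intro filterlim_at_top_mult_tendsto_pos[OF tendsto_const]) simp_all
  show "\<forall>\<^sub>F n in sequentially. (x * (x + b)) ^ n * x \<le> (freal ^^ n) x"
    using assms funpow_freal_ge_geometric by simp
qed

lemma freal_surj_below: "x \<in> {0<..<beta} \<Longrightarrow> \<exists>y\<in>{0<..<beta}. freal y = x"
proof -
  assume x: "x \<in> {0<..<beta}"
  then have "freal x \<le> x"
    using funpow_freal_le[of x 1] by simp
  then obtain y where "x \<le> y" "y \<le> beta" "freal y = x"
    using IVT'[of freal x x beta] x freal_beta continuous_on_freal by auto
  moreover have "y \<noteq> beta" using x \<open>freal y = x\<close> freal_beta by auto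
  ultimately show ?thesis
    using x by (intro bexI[of _ y]) auto
qed

lemma freal_surj_above: "x \<in> {beta<..} \<Longrightarrow> \<exists>y\<in>{beta<..}. freal y = x"
proof -
  assume x: "x \<in> {beta<..}"
  then have "x \<le> freal x"
    using funpow_freal_ge[of x 1] by simp
  then obtain y where "beta \<le> y" "freal y = x"
    using IVT'[of freal beta x x] x freal_beta continuous_on_freal by auto
  moreover have "y \<noteq> beta" using x \<open>freal y = x\<close> freal_beta by auto
  ultimately show ?thesis
    by (intro bexI[of _ y]) auto
qed

lemma fa_of_real: "f (of_real x) = of_real (freal x)"
  by (simp add: fa_def freal_def b_def)

lemma funpow_fa_of_real: "(f ^^ n) (of_real x) = of_real ((freal ^^ n) x)"
  by (induction n) (simp_all add: fa_of_real)

lemma norm_fa_le: "norm (f z) \<le> freal (norm z)"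
proof -
  have "norm (z + 3 * of_real a / 2) \<le> norm z + b"
    using norm_triangle_ineq[of z "3 * of_real a / 2"] a_pos by (simp add: b_def norm_divide)
  then show ?thesis
    by (simp add: fa_def freal_def norm_mult norm_power mult_left_mono)
qed

lemma norm_funpow_fa_le: "norm ((f ^^ n) z) \<le> (freal ^^ n) (norm z)"
proof (induction n)
  case (Suc n)
  have "norm ((f ^^ Suc n) z) \<le> freal (norm ((f ^^ n) z))"
    by (simp add: norm_fa_le)
  also have "\<dots> \<le> (freal ^^ Suc n) (norm z)"
    using Suc.IH by (simp add: freal_mono)
  finally show ?case .
qed simp

lemma continuous_on_funpow_fa: "continuous_on UNIV (f ^^ n)"
proof (induction n)
  case (Suc n)
  have "continuous_on UNIV f"
    unfolding fa_def by (intro continuous_intros)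
  then show ?case
    using Suc.IH by (simp add: continuous_on_compose2)
qed simp

lemma ball_subset_basin0: "ball 0 beta \<subseteq> basin0 (of_real a)"
proof
  fix z :: complex assume "z \<in> ball 0 beta"
  then have "(\<lambda>n. (freal ^^ n) (norm z)) \<longlonglongrightarrow> 0"
    by (intro funpow_freal_tendsto_0) auto
  then have "(\<lambda>n. (f ^^ n) z) \<longlonglongrightarrow> 0"
    by (rule Lim_null_comparison[rotated]) (simp add: norm_funpow_fa_le)
  then show "z \<in> basin0 (of_real a)" by (simp add: basin0_def)
qed

lemma basin0_eq_Union: "basin0 (of_real a) = (\<Union>n. (f ^^ n) -` ball 0 beta)"
proof safe
  fix z assume "z \<in> basin0 (of_real a)"
  then have "\<forall>\<^sub>F n in sequentially. (f ^^ n) z \<in> ball 0 beta"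
    unfolding basin0_def using beta_pos by (intro topological_tendstoD) auto
  then show "z \<in> (\<Union>n. (f ^^ n) -` ball 0 beta)"
    by (auto simp: eventually_sequentially)
next
  fix z n assume "(f ^^ n) z \<in> ball 0 beta"
  then have "(\<lambda>m. (f ^^ m) ((f ^^ n) z)) \<longlonglongrightarrow> 0"
    using ball_subset_basin0 by (auto simp: basin0_def)
  then have "(\<lambda>m. (f ^^ (m + n)) z) \<longlonglongrightarrow> 0"
    by (simp add: funpow_add)
  then have "(\<lambda>m. (f ^^ m) z) \<longlonglongrightarrow> 0"
    by (rule LIMSEQ_offset)
  then show "z \<in> basin0 (of_real a)"
    by (simp add: basin0_def)
qed

lemma open_A1: "open (A1 (of_real a))"
proof -
  have "open ((f ^^ n) -` ball 0 beta)" for n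
    by (rule open_vimage) (simp_all add: continuous_on_funpow_fa)
  then have "open (basin0 (of_real a))"
    unfolding basin0_eq_Union by blast
  then show ?thesis
    unfolding A1_def by (rule open_connected_component)
qed

lemma ball_subset_A1: "ball 0 beta \<subseteq> A1 (of_real a)"
  unfolding A1_def
  by (rule connected_component_maximal) (simp_all add: beta_pos ball_subset_basin0)

lemma of_real_in_A1: "0 \<le> x \<Longrightarrow> x < beta \<Longrightarrow> of_real x \<in> A1 (of_real a)"
  using ball_subset_A1 by auto

lemma of_real_in_Ainf: "beta < x \<Longrightarrow> of_real x \<in> Ainf (of_real a)"
  using filterlim_compose[OF filterlim_of_real_at_infinity funpow_freal_tendsto_at_top]
  by (simp add: Ainf_def funpow_fa_of_real)

end

section \<open>The external ray of angle \<open>0\<close>\<close>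

locale cubic_family_external = cubic_family +
  fixes \<psi> :: "complex \<Rightarrow> complex"
  assumes boettcher_inf: "is_boettcher_inf (of_real a) \<psi>"
begin

lemma continuous_on_psi: "continuous_on (Ainf (of_real a)) \<psi>"
  using boettcher_inf holomorphic_on_imp_continuous_on by (auto simp: is_boettcher_inf_def)

lemma inj_on_psi: "inj_on \<psi> (Ainf (of_real a))"
  using boettcher_inf by (simp add: is_boettcher_inf_def bij_betw_def)

lemma norm_psi_gt_1: "z \<in> Ainf (of_real a) \<Longrightarrow> 1 < norm (\<psi> z)"
  using boettcher_inf by (force simp: is_boettcher_inf_def bij_betw_def)

lemma psi_fa: "z \<in> Ainf (of_real a) \<Longrightarrow> \<psi> (f z) = \<psi> z ^ 3"
  using boettcher_inf by (simp add: is_boettcher_inf_def)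

lemma psi_asymp: "((\<lambda>z. \<psi> z / z) \<longlongrightarrow> 1) at_infinity"
  using boettcher_inf by (simp add: is_boettcher_inf_def)

lemma psi_of_real_nonzero: "beta < x \<Longrightarrow> \<psi> (of_real x) \<noteq> 0"
  using norm_psi_gt_1[OF of_real_in_Ainf] by force

lemma continuous_on_psi_of_real: "continuous_on {beta<..} (\<lambda>x. \<psi> (of_real x))"
  using of_real_in_Ainf
  by (intro continuous_on_compose2[OF continuous_on_psi continuous_on_of_real[OF continuous_on_id]])
    auto

lemma psi_funpow_freal: "beta < x \<Longrightarrow> \<psi> (of_real ((freal ^^ n) x)) = \<psi> (of_real x) ^ 3 ^ n"
proof (induction n)
  case (Suc n)
  have "beta < (freal ^^ n) x"
    using Suc.prems funpow_freal_ge[of x n] by simp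
  then have "\<psi> (of_real ((freal ^^ Suc n) x)) = \<psi> (of_real ((freal ^^ n) x)) ^ 3"
    by (simp add: psi_fa of_real_in_Ainf flip: fa_of_real)
  then show ?case
    using Suc by (simp add: power_mult[symmetric] mult.commute)
qed simp

lemma Arg_psi_of_real_small: "\<forall>\<^sub>F x in at_top. \<bar>Arg (\<psi> (of_real x))\<bar> < pi / 3"
proof -
  have "((\<lambda>x. \<psi> (of_real x) / of_real x) \<longlongrightarrow> 1) at_top"
    by (rule filterlim_compose[OF psi_asymp filterlim_of_real_at_infinity])
  then have "((\<lambda>x. Arg (\<psi> (of_real x) / of_real x)) \<longlongrightarrow> Arg 1) at_top"
    by (intro tendsto_Arg) (auto simp: nonpos_Reals_def)
  then have "\<forall>\<^sub>F x in at_top. dist (Arg (\<psi> (of_real x) / of_real x)) 0 < pi / 3"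
    by (intro tendstoD) auto
  with eventually_gt_at_top[of 0] show ?thesis
    by eventually_elim (simp add: dist_real_def)
qed

lemma psi_nonneg_Reals_at_top:
  obtains X where "\<And>x. X \<le> x \<Longrightarrow> \<psi> (of_real x) \<in> \<real>\<^sub>\<ge>\<^sub>0"
proof -
  obtain X where X: "\<And>x. X \<le> x \<Longrightarrow> \<bar>Arg (\<psi> (of_real x))\<bar> < pi / 3"
    using Arg_psi_of_real_small by (auto simp: eventually_at_top_linorder)
  have "\<psi> (of_real x) \<in> \<real>\<^sub>\<ge>\<^sub>0" if "max X (beta + 1) \<le> x" for x
  proof -
    have orbit: "beta < (freal ^^ n) x" "X \<le> (freal ^^ n) x" for n
      using that funpow_freal_ge[of x n] by auto
    have "\<psi> (of_real ((freal ^^ 0) x)) \<in> \<real>\<^sub>\<ge>\<^sub>0"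
    proof (rule nonneg_Reals_of_iterated_powers[of 3])
      show "\<psi> (of_real ((freal ^^ Suc n) x)) = \<psi> (of_real ((freal ^^ n) x)) ^ 3" for n
        using orbit(1)[of n] by (simp add: psi_fa of_real_in_Ainf flip: fa_of_real)
      show "\<psi> (of_real ((freal ^^ n) x)) \<noteq> 0" for n
        using orbit(1) by (rule psi_of_real_nonzero)
      show "\<bar>Arg (\<psi> (of_real ((freal ^^ n) x)))\<bar> < pi / real 3" for n
        using X[OF orbit(2)] by simp
    qed simp
    then show ?thesis by simp
  qed
  then show ?thesis by (rule that)
qed

lemma psi_nonneg_Reals: "beta < x \<Longrightarrow> \<psi> (of_real x) \<in> \<real>\<^sub>\<ge>\<^sub>0"
proof -
  assume "beta < x"
  obtain X where X: "\<And>x. X \<le> x \<Longrightarrow> \<psi> (of_real x) \<in> \<real>\<^sub>\<ge>\<^sub>0"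
    using psi_nonneg_Reals_at_top by blast
  obtain n where n: "X \<le> (freal ^^ n) x"
    using funpow_freal_tendsto_at_top[OF \<open>beta < x\<close>]
    by (auto simp: filterlim_at_top eventually_sequentially)
  show ?thesis
  proof (rule nonneg_Reals_by_continuity[of "{x..}" "\<lambda>y. \<psi> (of_real y)" "3 ^ n" "max x X"])
    show "continuous_on {x..} (\<lambda>y. \<psi> (of_real y))"
      using \<open>beta < x\<close> by (intro continuous_on_subset[OF continuous_on_psi_of_real]) auto
    show "\<psi> (of_real y) ^ 3 ^ n \<in> \<real>\<^sub>\<ge>\<^sub>0" if "y \<in> {x..}" for y
    proof -
      have "X \<le> (freal ^^ n) y"
        using that \<open>beta < x\<close> beta_pos n funpow_freal_mono[of x y n] by simp
      then have "\<psi> (of_real ((freal ^^ n) y)) \<in> \<real>\<^sub>\<ge>\<^sub>0" by (rule X)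
      moreover have "beta < y" using that \<open>beta < x\<close> by simp
      ultimately show ?thesis by (simp add: psi_funpow_freal)
    qed
    show "\<psi> (of_real y) \<noteq> 0" if "y \<in> {x..}" for y
      using that \<open>beta < x\<close> by (intro psi_of_real_nonzero) simp
    show "\<psi> (of_real (max x X)) \<in> \<real>\<^sub>\<ge>\<^sub>0"
      by (rule X) simp
  qed (simp_all add: connected_Ici)
qed

definition rad_psi :: "real \<Rightarrow> real" where "rad_psi x = norm (\<psi> (of_real x))"

lemma psi_of_real_eq_rad_psi: "beta < x \<Longrightarrow> \<psi> (of_real x) = of_real (rad_psi x)"
  using psi_nonneg_Reals by (simp add: rad_psi_def nonneg_Reals_iff_of_real_norm)

lemma continuous_on_rad_psi: "continuous_on {beta<..} rad_psi"
  unfolding rad_psi_def by (intro continuous_on_norm continuous_on_psi_of_real)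

lemma inj_on_rad_psi: "inj_on rad_psi {beta<..}"
proof (rule inj_onI)
  fix x y assume "x \<in> {beta<..}" "y \<in> {beta<..}" "rad_psi x = rad_psi y"
  then have "\<psi> (of_real x) = \<psi> (of_real y)"
    by (simp add: psi_of_real_eq_rad_psi)
  then show "x = y"
    using inj_onD[OF inj_on_psi] of_real_in_Ainf \<open>x \<in> {beta<..}\<close> \<open>y \<in> {beta<..}\<close> by force
qed

lemma rad_psi_freal: "beta < x \<Longrightarrow> rad_psi (freal x) = rad_psi x ^ 3"
  using psi_funpow_freal[of x 1] by (simp add: rad_psi_def norm_power)

lemma rad_psi_tendsto_at_top: "filterlim rad_psi at_top at_top"
proof -
  have "((\<lambda>x. \<psi> (of_real x) / of_real x) \<longlongrightarrow> 1) at_top"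
    by (rule filterlim_compose[OF psi_asymp filterlim_of_real_at_infinity])
  then have "((\<lambda>x. norm (\<psi> (of_real x) / of_real x)) \<longlongrightarrow> 1) at_top"
    using tendsto_norm by fastforce
  then have lim: "filterlim (\<lambda>x. norm (\<psi> (of_real x) / of_real x) * x) at_top at_top"
    by (rule filterlim_tendsto_pos_mult_at_top) (simp_all add: filterlim_ident)
  have "\<forall>\<^sub>F x in at_top. norm (\<psi> (of_real x) / of_real x) * x = rad_psi x"
    using eventually_gt_at_top[of 0] by eventually_elim (simp add: rad_psi_def norm_divide)
  then show ?thesis
    by (rule filterlim_cong[OF refl refl, THEN iffD1, OF _ lim])
qed

lemma strict_mono_on_rad_psi: "strict_mono_on {beta<..} rad_psi"
proof (rule strict_mono_onI)
  fix x y assume xy: "x \<in> {beta<..}" "y \<in> {beta<..}" "x < y"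
  have "\<forall>\<^sub>F t in at_top. rad_psi x < rad_psi t \<and> y < t"
    using rad_psi_tendsto_at_top by (intro eventually_conj filterlim_at_top_dense[THEN iffD1, rule_format]
        eventually_gt_at_top)
  then obtain t where t: "rad_psi x < rad_psi t" "y < t"
    using eventually_happens' by (auto simp: eventually_at_top_linorder)
  have "{x..t} \<subseteq> {beta<..}" using xy by auto
  then have "continuous_on {x..t} rad_psi" "inj_on rad_psi {x..t}"
    using continuous_on_subset[OF continuous_on_rad_psi] inj_on_subset[OF inj_on_rad_psi] by auto
  then show "rad_psi x < rad_psi y"
    using continuous_inj_imp_mono[of x y t rad_psi] xy t by auto
qed

lemma rad_psi_surj: "1 < r \<Longrightarrow> \<exists>x\<in>{beta<..}. rad_psi x = r"
proof -
  assume "1 < r"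
  obtain x1 where x1: "beta < x1" "rad_psi x1 < r"
    using exists_less_of_power_conjugate[of "{beta<..}" freal rad_psi 3 "beta + 1" r]
      freal_surj_above rad_psi_freal \<open>1 < r\<close> by auto
  obtain x2 where x2: "x1 \<le> x2" "r \<le> rad_psi x2"
    using eventually_conj[OF eventually_ge_at_top[of x1]
        filterlim_at_top[THEN iffD1, OF rad_psi_tendsto_at_top, rule_format, of r]]
    by (auto simp: eventually_at_top_linorder)
  have "continuous_on {x1..x2} rad_psi"
    using x1 by (intro continuous_on_subset[OF continuous_on_rad_psi]) auto
  then obtain x where "x1 \<le> x" "x \<le> x2" "rad_psi x = r"
    using IVT'[of rad_psi x1 r x2] x1 x2 by auto
  then show ?thesis using x1 by (intro bexI[of _ x]) auto
qed

lemma inv_rad_psi: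
  assumes "1 < r"
  shows "beta < inv_into {beta<..} rad_psi r" "rad_psi (inv_into {beta<..} rad_psi r) = r"
proof -
  have r: "r \<in> rad_psi ` {beta<..}" using rad_psi_surj[OF assms] by auto
  show "beta < inv_into {beta<..} rad_psi r" using inv_into_into[OF r] by simp
  show "rad_psi (inv_into {beta<..} rad_psi r) = r" using f_inv_into_f[OF r] .
qed

lemma inv_rad_psi_tendsto: "((\<lambda>r. inv_into {beta<..} rad_psi r) \<longlongrightarrow> beta) (at_right 1)"
proof (rule order_tendstoI)
  fix t assume "t < beta"
  show "\<forall>\<^sub>F r in at_right 1. t < inv_into {beta<..} rad_psi r"
    using eventually_at_right_less[of 1]
  proof eventually_elim
    case (elim r)
    then show ?case using inv_rad_psi(1)[OF elim] \<open>t < beta\<close> by simp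
  qed
next
  fix t assume "beta < t"
  have "\<forall>\<^sub>F r in at_right 1. r < rad_psi t"
    using \<open>beta < t\<close> norm_psi_gt_1[OF of_real_in_Ainf]
    by (intro order_tendstoD(2)[OF tendsto_ident_at]) (simp add: rad_psi_def)
  with eventually_at_right_less[of 1]
  show "\<forall>\<^sub>F r in at_right 1. inv_into {beta<..} rad_psi r < t"
  proof eventually_elim
    case (elim r)
    then have "rad_psi (inv_into {beta<..} rad_psi r) < rad_psi t"
      using inv_rad_psi(2) by simp
    then show ?case
      using strict_mono_on_less[OF strict_mono_on_rad_psi] inv_rad_psi(1)[OF \<open>1 < r\<close>] \<open>beta < t\<close>
      by simp
  qed
qed

lemma inv_psi_of_real:
  assumes "1 < r"
  shows "inv_into (Ainf (of_real a)) \<psi> (of_real r) = of_real (inv_into {beta<..} rad_psi r)"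
proof -
  let ?x = "inv_into {beta<..} rad_psi r"
  have "\<psi> (of_real ?x) = of_real r"
    using inv_rad_psi[OF assms] psi_of_real_eq_rad_psi by simp
  moreover have "inv_into (Ainf (of_real a)) \<psi> (\<psi> (of_real ?x)) = of_real ?x"
    using inv_rad_psi(1)[OF assms] by (intro inv_into_f_f inj_on_psi of_real_in_Ainf)
  ultimately show ?thesis by simp
qed

lemma external_ray_lands_beta: "external_ray_lands (of_real a) \<psi> 0 (of_real beta)"
proof -
  have "((\<lambda>r. complex_of_real (inv_into {beta<..} rad_psi r)) \<longlongrightarrow> of_real beta) (at_right 1)"
    using inv_rad_psi_tendsto by (rule tendsto_of_real)
  moreover have "\<forall>\<^sub>F r in at_right 1.
      complex_of_real (inv_into {beta<..} rad_psi r) = inv_into (Ainf (of_real a)) \<psi> (of_real r)"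
    using eventually_at_right_less[of 1] by eventually_elim (simp add: inv_psi_of_real)
  ultimately have "((\<lambda>r. inv_into (Ainf (of_real a)) \<psi> (of_real r)) \<longlongrightarrow> of_real beta) (at_right 1)"
    by (rule Lim_transform_eventually)
  then show ?thesis
    by (simp add: external_ray_lands_def)
qed

end

section \<open>The internal ray of angle \<open>0\<close>\<close>

locale cubic_family_internal = cubic_family +
  fixes \<phi> :: "complex \<Rightarrow> complex"
  assumes boettcher0: "is_boettcher0 (of_real a) \<phi>"
begin

lemma phi_holomorphic: "\<phi> holomorphic_on A1 (of_real a)"
  using boettcher0 by (simp add: is_boettcher0_def)

lemma inj_on_phi: "inj_on \<phi> (A1 (of_real a))"
  using boettcher0 by (simp add: is_boettcher0_def bij_betw_def)

lemma norm_phi_less_1: "z \<in> A1 (of_real a) \<Longrightarrow> norm (\<phi> z) < 1"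
  using boettcher0 by (force simp: is_boettcher0_def bij_betw_def)

lemma phi_fa: "z \<in> A1 (of_real a) \<Longrightarrow> \<phi> (f z) = \<phi> z ^ 2"
  using boettcher0 by (simp add: is_boettcher0_def)

lemma zero_in_A1: "0 \<in> A1 (of_real a)"
  using of_real_in_A1[of 0] beta_pos by simp

lemma phi_0: "\<phi> 0 = 0"
proof -
  have "f 0 = 0" by (simp add: fa_def)
  then have "\<phi> 0 * (\<phi> 0 - 1) = 0"
    using phi_fa[OF zero_in_A1] by (simp add: power2_eq_square algebra_simps)
  then show ?thesis
    using norm_phi_less_1[OF zero_in_A1] by auto
qed

lemma phi_of_real_nonzero: "0 < x \<Longrightarrow> x < beta \<Longrightarrow> \<phi> (of_real x) \<noteq> 0"
  using inj_onD[OF inj_on_phi, of "of_real x" 0] of_real_in_A1[of x] zero_in_A1 phi_0 by auto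

lemma continuous_on_phi_of_real: "continuous_on {0..<beta} (\<lambda>x. \<phi> (of_real x))"
  using of_real_in_A1 holomorphic_on_imp_continuous_on[OF phi_holomorphic]
  by (intro continuous_on_compose2[OF _ continuous_on_of_real[OF continuous_on_id]]) auto

lemma phi_funpow_freal:
  "0 \<le> x \<Longrightarrow> x < beta \<Longrightarrow> \<phi> (of_real ((freal ^^ n) x)) = \<phi> (of_real x) ^ 2 ^ n"
proof (induction n)
  case (Suc n)
  have "0 \<le> (freal ^^ n) x" "(freal ^^ n) x < beta"
    using Suc.prems funpow_freal_nonneg funpow_freal_le[of x n] by auto
  then have "\<phi> (of_real ((freal ^^ Suc n) x)) = \<phi> (of_real ((freal ^^ n) x)) ^ 2"
    by (simp add: phi_fa of_real_in_A1 flip: fa_of_real)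
  then show ?case
    using Suc by (simp add: power_mult[symmetric] mult.commute)
qed simp

lemma filterlim_freal_at_right_0: "filterlim freal (at_right 0) (at_right 0)"
proof -
  have "(freal \<longlongrightarrow> freal 0) (at_right 0)"
    unfolding freal_def by (intro tendsto_intros)
  then have "(freal \<longlongrightarrow> 0) (at_right 0)"
    by (simp add: freal_def)
  moreover have "\<forall>\<^sub>F x in at_right 0. freal x \<in> {0<..} \<and> freal x \<noteq> 0"
    using eventually_at_right_less[of 0] by eventually_elim (auto dest: freal_pos)
  ultimately show ?thesis
    unfolding filterlim_at by blast
qed

lemma phi_of_real_over_id_tendsto:
  obtains c where "c \<noteq> 0" "((\<lambda>x. \<phi> (of_real x) / of_real x) \<longlongrightarrow> c) (at_right 0)"
proof
  show "deriv \<phi> 0 \<noteq> 0"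
    using phi_holomorphic open_A1 inj_on_phi zero_in_A1 by (rule holomorphic_injective_imp_regular)
  have "(\<phi> has_field_derivative deriv \<phi> 0) (at 0)"
    using phi_holomorphic open_A1 zero_in_A1 by (rule holomorphic_derivI)
  then have "((\<lambda>z. \<phi> z / z) \<longlongrightarrow> deriv \<phi> 0) (at 0)"
    by (simp add: has_field_derivative_iff phi_0)
  moreover have "((\<lambda>x. complex_of_real x) \<longlongrightarrow> 0) (at_right 0)"
    using tendsto_of_real[OF tendsto_ident_at, of 0 "{0<..}"] by simp
  moreover have "\<forall>\<^sub>F x in at_right 0. complex_of_real x = 0 \<longrightarrow> \<phi> 0 / 0 = deriv \<phi> 0"
    using eventually_at_right_less[of 0] by eventually_elim simp
  ultimately have "(((\<lambda>z. \<phi> z / z) \<circ> complex_of_real) \<longlongrightarrow> deriv \<phi> 0) (at_right 0)"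
    by (intro tendsto_compose_at)
  then show "((\<lambda>x. \<phi> (of_real x) / of_real x) \<longlongrightarrow> deriv \<phi> 0) (at_right 0)"
    by (simp add: comp_def)
qed

text \<open>The limit \<open>c\<close> of \<open>\<phi> x / x\<close> satisfies \<open>c b = c\<^sup>2\<close> by the functional equation.\<close>
lemma phi_of_real_asymp: "((\<lambda>x. \<phi> (of_real x) / of_real x) \<longlongrightarrow> of_real b) (at_right 0)"
proof -
  define g where "g = (\<lambda>x. \<phi> (of_real x) / of_real x)"
  obtain c where "c \<noteq> 0" and g: "(g \<longlongrightarrow> c) (at_right 0)"
    using phi_of_real_over_id_tendsto unfolding g_def by blast
  have "((\<lambda>x. g (freal x) * of_real (x + b)) \<longlongrightarrow> c * of_real (0 + b)) (at_right 0)"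
    by (intro tendsto_mult filterlim_compose[OF g filterlim_freal_at_right_0] tendsto_intros)
  moreover have "\<forall>\<^sub>F x in at_right 0. g (freal x) * of_real (x + b) = g x ^ 2"
    unfolding eventually_at_right_field
  proof (intro exI[of _ beta] conjI allI impI)
    fix x assume x: "0 < x" "x < beta"
    have fx: "\<phi> (of_real (freal x)) = \<phi> (of_real x) ^ 2"
      using x by (simp add: phi_fa of_real_in_A1 flip: fa_of_real)
    have "complex_of_real (x + b) \<noteq> 0"
      using x b_pos by (simp only: of_real_eq_0_iff)
    have "g (freal x) * of_real (x + b) = \<phi> (of_real (freal x)) / of_real (freal x) * of_real (x + b)"
      by (simp add: g_def)
    also have "\<dots> = \<phi> (of_real x) ^ 2 / (of_real x ^ 2 * of_real (x + b)) * of_real (x + b)"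
      by (subst fx) (simp add: freal_def)
    also have "\<dots> = g x ^ 2"
      using \<open>complex_of_real (x + b) \<noteq> 0\<close> by (simp add: g_def power_divide)
    finally show "g (freal x) * of_real (x + b) = g x ^ 2" .
  qed (rule beta_pos)
  ultimately have "((\<lambda>x. g x ^ 2) \<longlongrightarrow> c * of_real b) (at_right 0)"
    by (simp add: tendsto_cong)
  moreover have "((\<lambda>x. g x ^ 2) \<longlongrightarrow> c ^ 2) (at_right 0)"
    by (intro tendsto_intros g)
  ultimately have "c * of_real b = c ^ 2"
    using tendsto_unique[OF trivial_limit_at_right_real] by blast
  then show ?thesis
    using g \<open>c \<noteq> 0\<close> by (simp add: g_def power2_eq_square)
qed

lemma Arg_phi_of_real_small: "\<forall>\<^sub>F x in at_right 0. \<bar>Arg (\<phi> (of_real x))\<bar> < pi / 2"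
proof -
  have "((\<lambda>x. Arg (\<phi> (of_real x) / of_real x)) \<longlongrightarrow> Arg (of_real b)) (at_right 0)"
    using phi_of_real_asymp b_pos by (intro tendsto_Arg) (auto simp: nonpos_Reals_def)
  then have "\<forall>\<^sub>F x in at_right 0. dist (Arg (\<phi> (of_real x) / of_real x)) 0 < pi / 2"
    using b_pos by (intro tendstoD) auto
  with eventually_at_right_less[of 0] show ?thesis
    by eventually_elim (simp add: dist_real_def)
qed

lemma phi_nonneg_Reals_near_0:
  obtains e where "0 < e" "\<And>x. 0 < x \<Longrightarrow> x < e \<Longrightarrow> \<phi> (of_real x) \<in> \<real>\<^sub>\<ge>\<^sub>0"
proof -
  obtain e where "0 < e" and e: "\<And>x. 0 < x \<Longrightarrow> x < e \<Longrightarrow> \<bar>Arg (\<phi> (of_real x))\<bar> < pi / 2"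
    using Arg_phi_of_real_small by (auto simp: eventually_at_right_field)
  have "\<phi> (of_real x) \<in> \<real>\<^sub>\<ge>\<^sub>0" if x: "0 < x" "x < min e beta" for x
  proof -
    have orbit: "0 < (freal ^^ n) x" "(freal ^^ n) x < min e beta" for n
      using x funpow_freal_pos[of x n] funpow_freal_le[of x n] by auto
    have "\<phi> (of_real ((freal ^^ 0) x)) \<in> \<real>\<^sub>\<ge>\<^sub>0"
    proof (rule nonneg_Reals_of_iterated_powers[of 2])
      show "\<phi> (of_real ((freal ^^ Suc n) x)) = \<phi> (of_real ((freal ^^ n) x)) ^ 2" for n
        using orbit[of n] by (simp add: phi_fa of_real_in_A1 flip: fa_of_real)
      show "\<phi> (of_real ((freal ^^ n) x)) \<noteq> 0" for n
        using orbit[of n] by (intro phi_of_real_nonzero) auto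
      show "\<bar>Arg (\<phi> (of_real ((freal ^^ n) x)))\<bar> < pi / real 2" for n
        using e orbit[of n] by simp
    qed simp
    then show ?thesis by simp
  qed
  then show ?thesis
    using \<open>0 < e\<close> beta_pos by (intro that[of "min e beta"]) auto
qed

lemma phi_nonneg_Reals: "0 \<le> x \<Longrightarrow> x < beta \<Longrightarrow> \<phi> (of_real x) \<in> \<real>\<^sub>\<ge>\<^sub>0"
proof (cases "x = 0")
  case False
  assume "0 \<le> x" "x < beta"
  with False have "0 < x" by simp
  obtain e where "0 < e" and e: "\<And>x. 0 < x \<Longrightarrow> x < e \<Longrightarrow> \<phi> (of_real x) \<in> \<real>\<^sub>\<ge>\<^sub>0"
    using phi_nonneg_Reals_near_0 by blast
  obtain n where n: "(freal ^^ n) x < e"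
    using order_tendstoD(2)[OF funpow_freal_tendsto_0 \<open>0 < e\<close>] \<open>0 \<le> x\<close> \<open>x < beta\<close>
    by (auto simp: eventually_sequentially)
  show ?thesis
  proof (rule nonneg_Reals_by_continuity[of "{0<..x}" "\<lambda>y. \<phi> (of_real y)" "2 ^ n" "min x (e / 2)"])
    show "continuous_on {0<..x} (\<lambda>y. \<phi> (of_real y))"
      using \<open>x < beta\<close> by (intro continuous_on_subset[OF continuous_on_phi_of_real]) auto
    show "\<phi> (of_real y) \<noteq> 0" if "y \<in> {0<..x}" for y
      using that \<open>x < beta\<close> by (intro phi_of_real_nonzero) auto
    show "\<phi> (of_real y) ^ 2 ^ n \<in> \<real>\<^sub>\<ge>\<^sub>0" if "y \<in> {0<..x}" for y
    proof -
      have "0 < (freal ^^ n) y" "(freal ^^ n) y < e"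
        using that n funpow_freal_pos[of y n] funpow_freal_mono[of y x n] by auto
      then have "\<phi> (of_real ((freal ^^ n) y)) \<in> \<real>\<^sub>\<ge>\<^sub>0" by (rule e)
      then show ?thesis
        using that \<open>x < beta\<close> by (simp add: phi_funpow_freal)
    qed
    show "\<phi> (of_real (min x (e / 2))) \<in> \<real>\<^sub>\<ge>\<^sub>0"
      using \<open>0 < x\<close> \<open>0 < e\<close> by (intro e) auto
  qed (use \<open>0 < x\<close> \<open>0 < e\<close> in auto)
qed (simp add: phi_0)

definition rad_phi :: "real \<Rightarrow> real" where "rad_phi x = norm (\<phi> (of_real x))"

lemma phi_of_real_eq_rad_phi: "0 \<le> x \<Longrightarrow> x < beta \<Longrightarrow> \<phi> (of_real x) = of_real (rad_phi x)"
  using phi_nonneg_Reals by (simp add: rad_phi_def nonneg_Reals_iff_of_real_norm)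

lemma continuous_on_rad_phi: "continuous_on {0..<beta} rad_phi"
  unfolding rad_phi_def by (intro continuous_on_norm continuous_on_phi_of_real)

lemma inj_on_rad_phi: "inj_on rad_phi {0..<beta}"
proof (rule inj_onI)
  fix x y assume xy: "x \<in> {0..<beta}" "y \<in> {0..<beta}" "rad_phi x = rad_phi y"
  then have "\<phi> (of_real x) = \<phi> (of_real y)"
    by (simp add: phi_of_real_eq_rad_phi)
  moreover have "of_real x \<in> A1 (of_real a)" "of_real y \<in> A1 (of_real a)"
    using xy by (simp_all add: of_real_in_A1)
  ultimately show "x = y"
    using inj_onD[OF inj_on_phi] by fastforce
qed

lemma rad_phi_0: "rad_phi 0 = 0"
  by (simp add: rad_phi_def phi_0)

lemma rad_phi_pos: "0 < x \<Longrightarrow> x < beta \<Longrightarrow> 0 < rad_phi x"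
  by (simp add: rad_phi_def phi_of_real_nonzero)

lemma rad_phi_less_1: "0 \<le> x \<Longrightarrow> x < beta \<Longrightarrow> rad_phi x < 1"
  by (simp add: rad_phi_def norm_phi_less_1 of_real_in_A1)

lemma rad_phi_freal: "0 \<le> x \<Longrightarrow> x < beta \<Longrightarrow> rad_phi (freal x) = rad_phi x ^ 2"
  using phi_funpow_freal[of x 1] by (simp add: rad_phi_def norm_power)

lemma strict_mono_on_rad_phi: "strict_mono_on {0..<beta} rad_phi"
proof (rule strict_mono_onI)
  fix x y assume xy: "x \<in> {0..<beta}" "y \<in> {0..<beta}" "x < y"
  show "rad_phi x < rad_phi y"
  proof (cases "x = 0")
    case True
    then show ?thesis using xy rad_phi_pos rad_phi_0 by simp
  next
    case False
    have "{0..y} \<subseteq> {0..<beta}" using xy by auto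
    then have "continuous_on {0..y} rad_phi" "inj_on rad_phi {0..y}"
      using continuous_on_subset[OF continuous_on_rad_phi] inj_on_subset[OF inj_on_rad_phi]
      by auto
    then show ?thesis
      using continuous_inj_imp_mono[of 0 x y rad_phi] xy False rad_phi_0 rad_phi_pos[of x] by auto
  qed
qed

lemma rad_phi_surj: "0 < r \<Longrightarrow> r < 1 \<Longrightarrow> \<exists>x\<in>{0<..<beta}. rad_phi x = r"
proof -
  assume r: "0 < r" "r < 1"
  obtain x1 where x1: "0 < x1" "x1 < beta" "inverse (rad_phi x1) < inverse r"
    using exists_less_of_power_conjugate[of "{0<..<beta}" freal "\<lambda>x. inverse (rad_phi x)" 2
        "beta / 2" "inverse r"] freal_surj_below r beta_pos
    by (auto simp: rad_phi_freal power_inverse one_less_inverse)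
  then have "r \<le> rad_phi x1"
    using r rad_phi_pos[of x1] by (simp add: inverse_less_iff_less less_imp_le)
  moreover have "continuous_on {0..x1} rad_phi"
    using x1 by (intro continuous_on_subset[OF continuous_on_rad_phi]) auto
  ultimately obtain x where "0 \<le> x" "x \<le> x1" "rad_phi x = r"
    using IVT'[of rad_phi 0 r x1] r x1 rad_phi_0 by auto
  moreover have "x \<noteq> 0" using \<open>rad_phi x = r\<close> r rad_phi_0 by auto
  ultimately show ?thesis using x1 by (intro bexI[of _ x]) auto
qed

lemma inv_rad_phi:
  assumes "0 < r" "r < 1"
  shows "0 < inv_into {0<..<beta} rad_phi r" "inv_into {0<..<beta} rad_phi r < beta"
    and "rad_phi (inv_into {0<..<beta} rad_phi r) = r"
proof -
  have r: "r \<in> rad_phi ` {0<..<beta}" using rad_phi_surj[OF assms] by auto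
  show "0 < inv_into {0<..<beta} rad_phi r" "inv_into {0<..<beta} rad_phi r < beta"
    using inv_into_into[OF r] by simp_all
  show "rad_phi (inv_into {0<..<beta} rad_phi r) = r" using f_inv_into_f[OF r] .
qed

lemma eventually_at_left_1_in_unit_interval: "\<forall>\<^sub>F r in at_left 1. 0 < r \<and> r < (1::real)"
  unfolding eventually_at_left_field by (intro exI[of _ 0]) auto

lemma inv_rad_phi_tendsto: "((\<lambda>r. inv_into {0<..<beta} rad_phi r) \<longlongrightarrow> beta) (at_left 1)"
proof (rule order_tendstoI)
  fix t assume "t < beta"
  define t' where "t' = max t 0"
  have t': "0 \<le> t'" "t' < beta" "t \<le> t'"
    using \<open>t < beta\<close> beta_pos by (auto simp: t'_def)
  have "\<forall>\<^sub>F r in at_left 1. rad_phi t' < r"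
    using rad_phi_less_1[OF t'(1,2)] by (intro order_tendstoD(1)[OF tendsto_ident_at])
  with eventually_at_left_1_in_unit_interval
  show "\<forall>\<^sub>F r in at_left 1. t < inv_into {0<..<beta} rad_phi r"
  proof eventually_elim
    case (elim r)
    then have "rad_phi t' < rad_phi (inv_into {0<..<beta} rad_phi r)"
      using inv_rad_phi(3) by simp
    then have "t' < inv_into {0<..<beta} rad_phi r"
      using strict_mono_on_less[OF strict_mono_on_rad_phi] inv_rad_phi(1,2)[of r] elim t'
      by simp
    then show ?case using t' by simp
  qed
next
  fix t assume "beta < t"
  show "\<forall>\<^sub>F r in at_left 1. inv_into {0<..<beta} rad_phi r < t"
    using eventually_at_left_1_in_unit_interval
  proof eventually_elim
    case (elim r)
    then show ?case using inv_rad_phi(2)[of r] \<open>beta < t\<close> by simp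
  qed
qed

lemma inv_phi_of_real:
  assumes "0 < r" "r < 1"
  shows "inv_into (A1 (of_real a)) \<phi> (of_real r) = of_real (inv_into {0<..<beta} rad_phi r)"
proof -
  let ?x = "inv_into {0<..<beta} rad_phi r"
  have "\<phi> (of_real ?x) = of_real r"
    using inv_rad_phi[OF assms] phi_of_real_eq_rad_phi by simp
  moreover have "inv_into (A1 (of_real a)) \<phi> (\<phi> (of_real ?x)) = of_real ?x"
    using inv_rad_phi(1,2)[OF assms] by (intro inv_into_f_f inj_on_phi of_real_in_A1) auto
  ultimately show ?thesis by simp
qed

lemma internal_ray_lands_beta: "internal_ray_lands (of_real a) \<phi> 0 (of_real beta)"
proof -
  have "((\<lambda>r. complex_of_real (inv_into {0<..<beta} rad_phi r)) \<longlongrightarrow> of_real beta) (at_left 1)"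
    using inv_rad_phi_tendsto by (rule tendsto_of_real)
  moreover have "\<forall>\<^sub>F r in at_left 1.
      complex_of_real (inv_into {0<..<beta} rad_phi r) = inv_into (A1 (of_real a)) \<phi> (of_real r)"
    using eventually_at_left_1_in_unit_interval by eventually_elim (simp add: inv_phi_of_real)
  ultimately have "((\<lambda>r. inv_into (A1 (of_real a)) \<phi> (of_real r)) \<longlongrightarrow> of_real beta) (at_left 1)"
    by (rule Lim_transform_eventually)
  then show ?thesis
    by (simp add: internal_ray_lands_def)
qed

end

text \<open>The hypothesis on the free critical point \<open>-a\<close> only serves to guarantee the
  existence of the Boettcher maps, which are given here.\<close>
theorem lemma2p4:
  fixes a :: real and \<phi> \<psi> :: "complex \<Rightarrow> complex"
  assumes "a > 0"
    and "- complex_of_real a \<notin> A1 (of_real a) \<union> Ainf (of_real a)"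
    and "is_boettcher0 (of_real a) \<phi>"
    and "is_boettcher_inf (of_real a) \<psi>"
  shows "\<exists>w. external_ray_lands (of_real a) \<psi> 0 w \<and> internal_ray_lands (of_real a) \<phi> 0 w"
proof -
  interpret external: cubic_family_external a \<psi>
    using assms(1,4) by unfold_locales
  interpret internal: cubic_family_internal a \<phi>
    using assms(1,3) by unfold_locales
  show ?thesis
    using external.external_ray_lands_beta internal.internal_ray_lands_beta by blast
qed

end
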